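(* Let $X,Y$ be Banach spaces and $\|\cdot\|$ a norm on $X\oplus Y$, with dual norm (also denoted $\|\cdot\|$) on $X^*\oplus Y^*$. Let $x^*\in X^*$, $y^*\in Y^*$ be such that (i) $1=\|x^*\|=\|x^*+y^*\|$; (ii) the partial Fréchet differential $\partial/\partial x^*$ of the dual norm exists at $x^*$ (i.e., the map $X^*\ni u^*\mapsto\|u^*\|$ is Fréchet differentiable at $x^*$); (iii) the partial Fréchet differential $\partial/\partial y^*$ of the dual norm at $x^*+y^*$ exists and equals $0$ (i.e., the map $Y^*\ni v^*\mapsto\|x^*+v^*\|$ is Fréchet differentiable at $y^*$ with derivative $0$). Then the dual norm is Fréchet differentiable at $x^*+y^*$.
   Context: The dual of $X\oplus Y$ is identified with $X^*\oplus Y^*$ via $(x^*+y^* )(x+y)=x^*(x)+y^*(y)$. *)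

theory Defs
  imports "HOL-Analysis.Analysis"
begin

text \<open>A norm N on the direct sum X \<oplus> Y (modelled as the product type), required to be
  equivalent to the standard product norm, so that (X \<oplus> Y, N) is a Banach space with the
  usual topology.\<close>
definition sum_norm :: "('a::real_normed_vector \<times> 'b::real_normed_vector \<Rightarrow> real) \<Rightarrow> bool" where
  "sum_norm N \<longleftrightarrow>
     (\<forall>z w. N (z + w) \<le> N z + N w) \<and>
     (\<forall>c z. N (scaleR c z) = \<bar>c\<bar> * N z) \<and>
     (\<forall>z. N z = 0 \<longrightarrow> z = 0) \<and>
     (\<exists>c C. 0 < c \<and> 0 < C \<and> (\<forall>z. c * norm z \<le> N z \<and> N z \<le> C * norm z))"

definition dual_norm ::
  "('a::real_normed_vector \<times> 'b::real_normed_vector \<Rightarrow> real) \<Rightarrow> ('a \<Rightarrow>\<^sub>L real) \<times> ('b \<Rightarrow>\<^sub>L real) \<Rightarrow> real" where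
  "dual_norm N p = Sup {\<bar>blinfun_apply (fst p) x + blinfun_apply (snd p) y\<bar> | x y. N (x, y) \<le> 1}"

end

theory Submission
  imports Defs
begin

text \<open>The dual norm \<open>F\<close> is sublinear, so it is Fr\'echet differentiable at a point as soon as it admits
  a first-order upper estimate there: the matching lower estimate comes for free from
  \<open>2 F p \<le> F (p + h) + F (p - h)\<close>. To bound \<open>F (x* + h, y* + k)\<close> from above, split off the
  fraction \<open>\<epsilon> = \<parallel>h\<parallel> / \<eta>\<close> of \<open>x*\<close>:
  \<open>(x* + h, y* + k) = (\<epsilon> x* + h, 0) + ((1 - \<epsilon>) x*, y* + k)\<close>.
  By homogeneity the first summand is \<open>\<epsilon>\<close> times the norm at a point of the sphere of radius
  \<open>\<eta>\<close> around \<open>x*\<close>, where differentiability in the first variable applies with a fixed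
  small error; the second summand is \<open>(1 - \<epsilon>)\<close> times the norm at \<open>(x*, w)\<close> with \<open>w\<close> close
  to \<open>y*\<close>, where the vanishing partial derivative in the second variable applies. The values
  \<open>\<epsilon> F (x*, 0)\<close> and \<open>(1 - \<epsilon>) F (x*, y*)\<close> add up to \<open>F (x*, y*)\<close> because the two are equal.\<close>

definition sublinear :: "('v::real_vector \<Rightarrow> real) \<Rightarrow> bool" where
  "sublinear F \<longleftrightarrow>
     (\<forall>p q. F (p + q) \<le> F p + F q) \<and> (\<forall>c p. 0 \<le> c \<longrightarrow> F (c *\<^sub>R p) = c * F p)"

lemma sublinear_add: "sublinear F \<Longrightarrow> F (p + q) \<le> F p + F q"
  unfolding sublinear_def by blast

lemma sublinear_scaleR: "sublinear F \<Longrightarrow> 0 \<le> c \<Longrightarrow> F (c *\<^sub>R p) = c * F p"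
  unfolding sublinear_def by blast

lemma sublinear_zero: "sublinear F \<Longrightarrow> F 0 = 0"
  using sublinear_scaleR[of F 0 0] by simp

lemma sublinear_compose_linear:
  assumes "sublinear F" and "linear L"
  shows "sublinear (\<lambda>v. F (L v))"
  using assms unfolding sublinear_def by (simp add: linear_add linear_scale)

lemma sublinear_has_derivative_if_upper_estimate:
  fixes F :: "'v::real_normed_vector \<Rightarrow> real"
  assumes F: "sublinear F" and D: "bounded_linear D"
    and upper: "\<And>e. e > 0 \<Longrightarrow> \<exists>d>0. \<forall>h. norm h < d \<longrightarrow> F (p + h) \<le> F p + D h + e * norm h"
  shows "(F has_derivative D) (at p)"
  unfolding has_derivative_at_alt
proof (intro conjI allI impI D)
  fix e :: real assume "e > 0"
  then obtain d where "d > 0" and d: "\<And>h. norm h < d \<Longrightarrow> F (p + h) \<le> F p + D h + e * norm h"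
    using upper by blast
  show "\<exists>d>0. \<forall>q. norm (q - p) < d \<longrightarrow> norm (F q - F p - D (q - p)) \<le> e * norm (q - p)"
  proof (intro exI[of _ d] conjI allI impI \<open>d > 0\<close>)
    fix q assume "norm (q - p) < d"
    define h where "h = q - p"
    have "norm h < d" "norm (- h) < d"
      using \<open>norm (q - p) < d\<close> by (simp_all add: h_def norm_minus_commute)
    then have "F (p + h) \<le> F p + D h + e * norm h" "F (p - h) \<le> F p - D h + e * norm h"
      using d[of h] d[of "- h"] linear_neg[OF bounded_linear.linear[OF D]] by auto
    moreover have "2 * F p \<le> F (p + h) + F (p - h)"
      using sublinear_add[OF F, of "p + h" "p - h"] sublinear_scaleR[OF F, of 2 p]
      by (simp add: scaleR_2)
    ultimately have "\<bar>F (p + h) - F p - D h\<bar> \<le> e * norm h" by linarith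
    then show "norm (F q - F p - D (q - p)) \<le> e * norm (q - p)" by (simp add: h_def)
  qed
qed

lemma sublinear_cone_estimate:
  fixes g :: "'v::real_normed_vector \<Rightarrow> real"
  assumes g: "sublinear g" and dg: "(g has_derivative D) (at x)" and "e > 0"
  obtains \<eta> where "\<eta> > 0"
    and "\<And>h. g ((norm h / \<eta>) *\<^sub>R x + h) \<le> (norm h / \<eta>) * g x + D h + e * norm h"
proof -
  obtain d where "d > 0"
    and d: "\<And>v. norm (v - x) < d \<Longrightarrow> norm (g v - g x - D (v - x)) \<le> e * norm (v - x)"
    using dg \<open>e > 0\<close> unfolding has_derivative_at_alt by blast
  have linD: "linear D" using dg has_derivative_linear by blast
  define \<eta> where "\<eta> = d / 2"
  have "\<eta> > 0" "\<eta> < d" using \<open>d > 0\<close> by (simp_all add: \<eta>_def)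
  have "g ((norm h / \<eta>) *\<^sub>R x + h) \<le> (norm h / \<eta>) * g x + D h + e * norm h" for h
  proof (cases "h = 0")
    case True
    then show ?thesis using sublinear_zero[OF g] linear_0[OF linD] by simp
  next
    case False
    define \<epsilon> where "\<epsilon> = norm h / \<eta>"
    define u where "u = inverse \<epsilon> *\<^sub>R h"
    have "\<epsilon> > 0" using False \<open>\<eta> > 0\<close> by (simp add: \<epsilon>_def)
    have h: "h = \<epsilon> *\<^sub>R u" using \<open>\<epsilon> > 0\<close> by (simp add: u_def)
    have "norm u = norm h / \<epsilon>" using \<open>\<epsilon> > 0\<close> by (simp add: u_def field_simps)
    also have "\<dots> = \<eta>" using False \<open>\<eta> > 0\<close> by (simp add: \<epsilon>_def)
    finally have "norm u = \<eta>" .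
    then have "g (x + u) \<le> g x + D u + e * \<eta>"
      using d[of "x + u"] \<open>\<eta> < d\<close> by simp
    then have "\<epsilon> * g (x + u) \<le> \<epsilon> * (g x + D u + e * \<eta>)"
      using \<open>\<epsilon> > 0\<close> by (intro mult_left_mono) auto
    moreover have "g (\<epsilon> *\<^sub>R x + h) = \<epsilon> * g (x + u)"
      using sublinear_scaleR[OF g, of \<epsilon> "x + u"] \<open>\<epsilon> > 0\<close> by (simp add: h scaleR_right_distrib)
    moreover have "D h = \<epsilon> * D u" by (simp add: h linear_scale[OF linD])
    ultimately have "g (\<epsilon> *\<^sub>R x + h) \<le> \<epsilon> * g x + D h + e * (\<epsilon> * \<eta>)"
      by (simp add: algebra_simps)
    then show ?thesis using \<open>\<eta> > 0\<close> by (simp add: \<epsilon>_def)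
  qed
  with \<open>\<eta> > 0\<close> show thesis by (rule that)
qed

lemma sublinear_shrink_estimate:
  fixes F :: "'a::real_normed_vector \<times> 'b::real_normed_vector \<Rightarrow> real"
  assumes F: "sublinear F" and dy: "((\<lambda>v. F (x, v)) has_derivative (\<lambda>_. 0)) (at y)"
    and "e > 0"
  obtains \<delta> where "\<delta> > 0"
    and "\<And>t k. 0 \<le> t \<Longrightarrow> t \<le> 1/2 \<Longrightarrow> norm (t *\<^sub>R y + k) < \<delta> \<Longrightarrow>
           F ((1 - t) *\<^sub>R x, y + k) \<le> (1 - t) * F (x, y) + e * norm (t *\<^sub>R y + k)"
proof -
  obtain d where "d > 0"
    and d: "\<And>w. norm (w - y) < d \<Longrightarrow> norm (F (x, w) - F (x, y)) \<le> e / 2 * norm (w - y)"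
    using dy \<open>e > 0\<close> unfolding has_derivative_at_alt by (metis diff_zero half_gt_zero)
  have "F ((1 - t) *\<^sub>R x, y + k) \<le> (1 - t) * F (x, y) + e * norm (t *\<^sub>R y + k)"
    if "0 \<le> t" "t \<le> 1/2" "norm (t *\<^sub>R y + k) < d / 2" for t k
  proof -
    define z where "z = t *\<^sub>R y + k"
    define w where "w = y + inverse (1 - t) *\<^sub>R z"
    have "(1 - t) *\<^sub>R w = (1 - t) *\<^sub>R y + z"
      using \<open>t \<le> 1/2\<close> by (simp add: w_def scaleR_right_distrib)
    then have "(1 - t) *\<^sub>R w = y + k" by (simp add: z_def algebra_simps)
    have "norm (w - y) \<le> 2 * norm z"
      using that(1,2) mult_right_mono[of "t * 2" 1 "norm z"] by (simp add: w_def field_simps)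
    then have "norm (w - y) < d" using that(3) by (simp add: z_def)
    then have "F (x, w) - F (x, y) \<le> e / 2 * norm (w - y)" using d[of w] by (metis abs_le_D1 real_norm_def)
    also have "\<dots> \<le> e * norm z"
      using mult_left_mono[OF \<open>norm (w - y) \<le> 2 * norm z\<close>, of "e / 2"] \<open>e > 0\<close> by simp
    finally have "(1 - t) * F (x, w) \<le> (1 - t) * (F (x, y) + e * norm z)"
      using that(2) by (intro mult_left_mono) auto
    also have "\<dots> \<le> (1 - t) * F (x, y) + e * norm z"
      using that(1) \<open>e > 0\<close> by (simp add: algebra_simps)
    finally have "(1 - t) * F (x, w) \<le> (1 - t) * F (x, y) + e * norm z" .
    moreover have "F ((1 - t) *\<^sub>R x, y + k) = (1 - t) * F (x, w)"
      using sublinear_scaleR[OF F, of "1 - t" "(x, w)"] that(2) \<open>(1 - t) *\<^sub>R w = y + k\<close> by simp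
    ultimately show ?thesis by (simp add: z_def)
  qed
  moreover have "d / 2 > 0" using \<open>d > 0\<close> by simp
  ultimately show thesis using that by blast
qed

lemma sublinear_pair_upper_estimate:
  fixes F :: "'a::real_normed_vector \<times> 'b::real_normed_vector \<Rightarrow> real"
  assumes F: "sublinear F" and eq: "F (x, 0) = F (x, y)"
    and dx: "((\<lambda>u. F (u, 0)) has_derivative D) (at x)"
    and dy: "((\<lambda>v. F (x, v)) has_derivative (\<lambda>_. 0)) (at y)"
    and "e > 0"
  shows "\<exists>d>0. \<forall>h k. norm (h, k) < d \<longrightarrow> F (x + h, y + k) \<le> F (x, y) + D h + e * norm (h, k)"
proof -
  have "linear (\<lambda>u::'a. (u, 0::'b))" by (simp add: linear_iff)
  with F have "sublinear (\<lambda>u. F (u, 0))" by (rule sublinear_compose_linear)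
  then obtain \<eta> where "\<eta> > 0" and cone:
    "\<And>h. F ((norm h / \<eta>) *\<^sub>R x + h, 0) \<le> (norm h / \<eta>) * F (x, 0) + D h + e / 2 * norm h"
    using sublinear_cone_estimate[OF _ dx, of "e / 2"] \<open>e > 0\<close> by auto
  define K where "K = norm y / \<eta> + 1"
  have "K \<ge> 1" using \<open>\<eta> > 0\<close> by (simp add: K_def)
  obtain \<delta> where "\<delta> > 0" and shrink: "\<And>t k. 0 \<le> t \<Longrightarrow> t \<le> 1/2 \<Longrightarrow> norm (t *\<^sub>R y + k) < \<delta> \<Longrightarrow>
      F ((1 - t) *\<^sub>R x, y + k) \<le> (1 - t) * F (x, y) + e / (2 * K) * norm (t *\<^sub>R y + k)"
    using sublinear_shrink_estimate[OF F dy, of "e / (2 * K)"] \<open>e > 0\<close> \<open>K \<ge> 1\<close> by auto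
  define d where "d = min (\<eta> / 2) (\<delta> / K)"
  have "d > 0" using \<open>\<eta> > 0\<close> \<open>\<delta> > 0\<close> \<open>K \<ge> 1\<close> by (simp add: d_def)
  have "F (x + h, y + k) \<le> F (x, y) + D h + e * norm (h, k)" if "norm (h, k) < d" for h k
  proof -
    define \<epsilon> where "\<epsilon> = norm h / \<eta>"
    have "norm h \<le> norm (h, k)" "norm k \<le> norm (h, k)" by (rule norm_fst_le, rule norm_snd_le)
    then have "0 \<le> \<epsilon>" "\<epsilon> \<le> 1/2" using that \<open>\<eta> > 0\<close> by (auto simp: \<epsilon>_def d_def field_simps)
    have "norm (\<epsilon> *\<^sub>R y + k) \<le> \<epsilon> * norm y + norm k"
      using norm_triangle_ineq[of "\<epsilon> *\<^sub>R y" k] \<open>0 \<le> \<epsilon>\<close> by simp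
    also have "\<dots> = norm y / \<eta> * norm h + norm k" by (simp add: \<epsilon>_def)
    also have "\<dots> \<le> norm y / \<eta> * norm (h, k) + norm (h, k)"
      using \<open>norm h \<le> norm (h, k)\<close> \<open>norm k \<le> norm (h, k)\<close> \<open>\<eta> > 0\<close>
      by (intro add_mono mult_left_mono) auto
    also have "\<dots> = K * norm (h, k)" by (simp add: K_def algebra_simps)
    finally have small: "norm (\<epsilon> *\<^sub>R y + k) \<le> K * norm (h, k)" .
    also have "\<dots> < \<delta>"
      using that \<open>K \<ge> 1\<close> by (simp add: d_def field_simps)
    finally have "F ((1 - \<epsilon>) *\<^sub>R x, y + k) \<le> (1 - \<epsilon>) * F (x, y) + e / 2 * norm (h, k)"
      using shrink[OF \<open>0 \<le> \<epsilon>\<close> \<open>\<epsilon> \<le> 1/2\<close>] mult_left_mono[OF small, of "e / (2 * K)"]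
        \<open>e > 0\<close> \<open>K \<ge> 1\<close> by fastforce
    moreover have "F (\<epsilon> *\<^sub>R x + h, 0) \<le> \<epsilon> * F (x, y) + D h + e / 2 * norm (h, k)"
      using cone[of h, unfolded eq] mult_left_mono[OF \<open>norm h \<le> norm (h, k)\<close>, of "e / 2"] \<open>e > 0\<close>
      unfolding \<epsilon>_def by linarith
    moreover have "F (x + h, y + k) \<le> F (\<epsilon> *\<^sub>R x + h, 0) + F ((1 - \<epsilon>) *\<^sub>R x, y + k)"
      using sublinear_add[OF F, of "(\<epsilon> *\<^sub>R x + h, 0)" "((1 - \<epsilon>) *\<^sub>R x, y + k)"]
      by (simp add: algebra_simps)
    ultimately show ?thesis by (simp add: algebra_simps)
  qed
  with \<open>d > 0\<close> show ?thesis by blast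
qed

lemma sublinear_pair_has_derivative:
  fixes F :: "'a::real_normed_vector \<times> 'b::real_normed_vector \<Rightarrow> real"
  assumes F: "sublinear F" and "F (x, 0) = F (x, y)"
    and dx: "((\<lambda>u. F (u, 0)) has_derivative D) (at x)"
    and "((\<lambda>v. F (x, v)) has_derivative (\<lambda>_. 0)) (at y)"
  shows "(F has_derivative (\<lambda>q. D (fst q))) (at (x, y))"
proof (rule sublinear_has_derivative_if_upper_estimate[OF F])
  show "bounded_linear (\<lambda>q. D (fst q))"
    using bounded_linear_compose[OF has_derivative_bounded_linear[OF dx] bounded_linear_fst] .
  fix e :: real assume "e > 0"
  then obtain d where "d > 0"
    and "\<forall>h k. norm (h, k) < d \<longrightarrow> F (x + h, y + k) \<le> F (x, y) + D h + e * norm (h, k)"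
    using sublinear_pair_upper_estimate[OF assms] by blast
  then show "\<exists>d>0. \<forall>q. norm q < d \<longrightarrow> F ((x, y) + q) \<le> F (x, y) + D (fst q) + e * norm q"
    by (metis add_Pair prod.collapse)
qed

lemma sum_norm_zero:
  assumes "sum_norm N"
  shows "N (0, 0) = 0"
proof -
  have "N (0 *\<^sub>R (0, 0)) = \<bar>0\<bar> * N (0, 0)" using assms unfolding sum_norm_def by blast
  then show ?thesis by simp
qed

lemma bdd_above_dual_norm_values:
  fixes N :: "'a::real_normed_vector \<times> 'b::real_normed_vector \<Rightarrow> real"
    and u :: "'a \<Rightarrow>\<^sub>L real" and v :: "'b \<Rightarrow>\<^sub>L real"
  assumes "sum_norm N"
  shows "bdd_above {\<bar>blinfun_apply u x + blinfun_apply v y\<bar> | x y. N (x, y) \<le> 1}"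
proof -
  obtain c where "c > 0" and c: "\<And>z. c * norm z \<le> N z"
    using assms unfolding sum_norm_def by blast
  have "\<bar>blinfun_apply u x + blinfun_apply v y\<bar> \<le> (norm u + norm v) / c" if "N (x, y) \<le> 1" for x y
  proof -
    have "norm (x, y) \<le> 1 / c" using c[of "(x, y)"] that \<open>c > 0\<close> by (simp add: field_simps)
    then have "norm x \<le> 1 / c" "norm y \<le> 1 / c"
      using norm_fst_le[of x y] norm_snd_le[of y x] by linarith+
    have "\<bar>blinfun_apply u x + blinfun_apply v y\<bar> \<le> norm u * norm x + norm v * norm y"
      using norm_blinfun[of u x] norm_blinfun[of v y] by simp
    also have "\<dots> \<le> norm u * (1 / c) + norm v * (1 / c)"
      using \<open>norm x \<le> 1 / c\<close> \<open>norm y \<le> 1 / c\<close> by (intro add_mono mult_left_mono) auto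
    finally show ?thesis by (simp add: add_divide_distrib)
  qed
  then show ?thesis by (intro bdd_aboveI[where M = "(norm u + norm v) / c"]) blast
qed

lemma dual_norm_upper:
  assumes "sum_norm N" and "N (x, y) \<le> 1"
  shows "\<bar>blinfun_apply u x + blinfun_apply v y\<bar> \<le> dual_norm N (u, v)"
  unfolding dual_norm_def using assms by (intro cSup_upper bdd_above_dual_norm_values) auto

lemma dual_norm_least:
  assumes "sum_norm N" and "\<And>x y. N (x, y) \<le> 1 \<Longrightarrow> \<bar>blinfun_apply u x + blinfun_apply v y\<bar> \<le> M"
  shows "dual_norm N (u, v) \<le> M"
  unfolding dual_norm_def prod.sel
proof (rule cSup_least)
  have "N (0, 0) \<le> 1" using sum_norm_zero[OF assms(1)] by simp
  then show "{\<bar>blinfun_apply u x + blinfun_apply v y\<bar> | x y. N (x, y) \<le> 1} \<noteq> {}" by blast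
qed (use assms(2) in blast)

lemma dual_norm_nonneg: "sum_norm N \<Longrightarrow> 0 \<le> dual_norm N p"
  using dual_norm_upper[of N 0 0 "fst p" "snd p"] sum_norm_zero[of N] by simp

lemma dual_norm_add:
  assumes "sum_norm N"
  shows "dual_norm N (p + q) \<le> dual_norm N p + dual_norm N q"
proof (cases p, cases q)
  fix u v u' v' assume pq: "p = (u, v)" "q = (u', v')"
  have "\<bar>blinfun_apply (u + u') x + blinfun_apply (v + v') y\<bar> \<le> dual_norm N (u, v) + dual_norm N (u', v')"
    if "N (x, y) \<le> 1" for x y
    using dual_norm_upper[OF assms that, of u v] dual_norm_upper[OF assms that, of u' v']
    by (simp add: blinfun.add_left)
  then show ?thesis using dual_norm_least[OF assms] pq by simp
qed

lemma dual_norm_scaleR_le: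
  assumes "sum_norm N" and "0 \<le> c"
  shows "dual_norm N (c *\<^sub>R p) \<le> c * dual_norm N p"
proof (cases p)
  case (Pair u v)
  have "\<bar>blinfun_apply (c *\<^sub>R u) x + blinfun_apply (c *\<^sub>R v) y\<bar> \<le> c * dual_norm N (u, v)"
    if "N (x, y) \<le> 1" for x y
    using mult_left_mono[OF dual_norm_upper[OF assms(1) that, of u v] assms(2)] assms(2)
    by (simp add: blinfun.scaleR_left abs_mult distrib_left[symmetric])
  then show ?thesis using dual_norm_least[OF assms(1)] Pair by simp
qed

lemma dual_norm_scaleR:
  assumes "sum_norm N" and "0 \<le> c"
  shows "dual_norm N (c *\<^sub>R p) = c * dual_norm N p"
proof (cases "c = 0")
  case True
  then show ?thesis
    using dual_norm_scaleR_le[OF assms] dual_norm_nonneg[OF assms(1)] by (simp add: order_antisym)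
next
  case False
  have "dual_norm N p = dual_norm N (inverse c *\<^sub>R (c *\<^sub>R p))" using False by simp
  also have "\<dots> \<le> inverse c * dual_norm N (c *\<^sub>R p)"
    using dual_norm_scaleR_le[OF assms(1), of "inverse c" "c *\<^sub>R p"] assms(2) by simp
  finally have "c * dual_norm N p \<le> dual_norm N (c *\<^sub>R p)"
    using False assms(2) by (simp add: field_simps)
  then show ?thesis using dual_norm_scaleR_le[OF assms, of p] by simp
qed

lemma sublinear_dual_norm: "sum_norm N \<Longrightarrow> sublinear (dual_norm N)"
  unfolding sublinear_def using dual_norm_add dual_norm_scaleR by blast

theorem lemma3p2:
  fixes N :: "'a::banach \<times> 'b::banach \<Rightarrow> real"
    and xs :: "'a \<Rightarrow>\<^sub>L real" and ys :: "'b \<Rightarrow>\<^sub>L real"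
  assumes "sum_norm N"
    and "dual_norm N (xs, 0) = 1" and "dual_norm N (xs, ys) = 1"
    and "(\<lambda>u. dual_norm N (u, 0)) differentiable (at xs)"
    and "((\<lambda>v. dual_norm N (xs, v)) has_derivative (\<lambda>_. 0)) (at ys)"
  shows "(dual_norm N) differentiable (at (xs, ys))"
proof -
  obtain D where "((\<lambda>u. dual_norm N (u, 0)) has_derivative D) (at xs)"
    using assms(4) unfolding differentiable_def by blast
  then have "(dual_norm N has_derivative (\<lambda>q. D (fst q))) (at (xs, ys))"
    using sublinear_pair_has_derivative[OF sublinear_dual_norm[OF assms(1)] _ _ assms(5)] assms(2,3)
    by simp
  then show ?thesis unfolding differentiable_def by blast
qed

end
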